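(* Let $X_t,Y_t$ be symmetric Lévy processes in $\mathbb{R}^d$ with triplets $(0,\nu^X,0)$, $(0,\nu^Y,0)$, Lévy measures absolutely continuous with densities $\nu^X(x),\nu^Y(x)$, and transition densities $p^X(t,x),p^Y(t,x)$. Suppose $\sigma(x)=\nu^X(x)-\nu^Y(x)$ is integrable, and that for some $\delta>0$, $\zeta>0$ and constants $c_1,c_2,c_3$: (i) $|p^X(t,\cdot)*\sigma(x)|+|\sigma(x)|\le c_1$ for $|x|\ge\delta$ and $0<t\le1$; (ii) $p^X(t,x)\le c_2t^{-\zeta}$ for all $x$ and $0<t\le1$; (iii) $p^X(t,x)\le c_3$ for $|x|\ge\delta$ and $0<t\le 1$. Then there is a constant $C$ such that $p^Y(t,x)\le C$ for all $t>0$ and all $|x|\ge([\zeta]\vee1)\delta$, where $[\zeta]$ is the integer part of $\zeta$.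
   Context: $p^X(t,\cdot)*\sigma(x)=\int p^X(t,x-y)\sigma(y)\,dy$. *)

theory Defs
  imports "HOL-Analysis.Analysis"
begin

definition symmetric_levy_density :: "('a::euclidean_space \<Rightarrow> real) \<Rightarrow> bool" where
  "symmetric_levy_density \<nu> \<longleftrightarrow>
     \<nu> \<in> borel_measurable lborel \<and> (\<forall>x. 0 \<le> \<nu> x) \<and> (\<forall>x. \<nu> (- x) = \<nu> x) \<and>
     integrable lborel (\<lambda>x. min 1 ((norm x)\<^sup>2) * \<nu> x)"

text \<open>Levy-Khintchine exponent for the triplet (0, nu, 0) with nu symmetric.\<close>
definition levy_exponent :: "('a::euclidean_space \<Rightarrow> real) \<Rightarrow> 'a \<Rightarrow> real" where
  "levy_exponent \<nu> \<xi> = (\<integral>x. (1 - cos (\<xi> \<bullet> x)) * \<nu> x \<partial>lborel)"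

definition transition_density ::
    "('a::euclidean_space \<Rightarrow> real) \<Rightarrow> (real \<Rightarrow> 'a \<Rightarrow> real) \<Rightarrow> bool" where
  "transition_density \<nu> p \<longleftrightarrow>
     (\<forall>t>0. p t \<in> borel_measurable lborel \<and> (\<forall>x. 0 \<le> p t x) \<and> integrable lborel (p t) \<and>
        (\<forall>\<xi>. (\<integral>x. p t x *\<^sub>R cis (\<xi> \<bullet> x) \<partial>lborel) =
              complex_of_real (exp (- t * levy_exponent \<nu> \<xi>))))"

definition conv :: "('a::euclidean_space \<Rightarrow> real) \<Rightarrow> ('a \<Rightarrow> real) \<Rightarrow> 'a \<Rightarrow> real" where
  "conv f g x = (\<integral>y. f (x - y) * g y \<partial>lborel)"

end

theory Submission
  imports Defs
begin

(*
  Since sigma = nu^X - nu^Y is integrable, the Levy exponents differ by an integrable term: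
  psi^Y = psi^X - m + sigma^, where m is the integral of sigma and sigma^ its (real) Fourier
  transform. By uniqueness of the Fourier transform on L^1, p^Y_t is therefore e^(t m) times the
  convolution exponential p^X_t * exp(-t sigma) = sum_n (-t)^n / n! p^X_t * sigma^{*n}.
  For |x| >= max [zeta] 1 * delta, the terms with 1 <= n <= zeta are bounded by an induction that
  splits each convolution at |y| = delta and uses (i) and (iii), while for n > zeta the factor
  t^n absorbs the blow-up t^(-zeta) of (ii). Summing gives a bound for t <= 1, uniform in t. For
  t > 1 the semigroup property p^Y_t = p^Y_(t-1) * p^Y_1 transfers the global bound of p^Y_1.
*)

section \<open>Uniqueness of the Fourier transform on Euclidean space\<close>

definition fourier :: "('a::euclidean_space \<Rightarrow> real) \<Rightarrow> 'a \<Rightarrow> complex" where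
  "fourier f \<xi> = (\<integral>x. f x *\<^sub>R cis (\<xi> \<bullet> x) \<partial>lborel)"

lemma borel_measurable_cis_inner [measurable]:
  "(\<lambda>x::'a::euclidean_space. cis (\<xi> \<bullet> x)) \<in> borel_measurable borel"
  by (intro borel_measurable_continuous_onI continuous_intros)

lemma integrable_fourier_integrand:
  fixes f :: "'a::euclidean_space \<Rightarrow> real"
  assumes f: "integrable lborel f"
  shows "integrable lborel (\<lambda>x. f x *\<^sub>R cis (\<xi> \<bullet> x))"
proof (rule Bochner_Integration.integrable_bound[OF f])
  have [measurable]: "f \<in> borel_measurable lborel" using f by auto
  show "(\<lambda>x. f x *\<^sub>R cis (\<xi> \<bullet> x)) \<in> borel_measurable lborel" by measurable
qed simp

lemma fourier_diff:
  fixes f g :: "'a::euclidean_space \<Rightarrow> real"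
  assumes "integrable lborel f" "integrable lborel g"
  shows "fourier (\<lambda>x. f x - g x) \<xi> = fourier f \<xi> - fourier g \<xi>"
  unfolding fourier_def scaleR_left_diff_distrib
  using assms by (intro Bochner_Integration.integral_diff integrable_fourier_integrand)

definition trig_polynomial :: "('a::euclidean_space \<Rightarrow> complex) \<Rightarrow> bool" where
  "trig_polynomial g \<longleftrightarrow> (\<exists>S c. finite S \<and> (\<forall>x. g x = (\<Sum>\<xi>\<in>S. c \<xi> * cis (\<xi> \<bullet> x))))"

lemma trig_polynomial_const: "trig_polynomial (\<lambda>x. k)"
  unfolding trig_polynomial_def by (rule exI[of _ "{0}"], rule exI[of _ "\<lambda>_. k"]) simp

lemma trig_polynomial_cis: "trig_polynomial (\<lambda>x. cis (\<xi> \<bullet> x))"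
  unfolding trig_polynomial_def by (rule exI[of _ "{\<xi>}"], rule exI[of _ "\<lambda>_. 1"]) simp

lemma trig_polynomial_add:
  assumes "trig_polynomial g" "trig_polynomial h"
  shows "trig_polynomial (\<lambda>x. g x + h x)"
proof -
  obtain S c where S: "finite S" "\<And>x. g x = (\<Sum>\<xi>\<in>S. c \<xi> * cis (\<xi> \<bullet> x))"
    using assms(1) unfolding trig_polynomial_def by blast
  obtain T d where T: "finite T" "\<And>x. h x = (\<Sum>\<xi>\<in>T. d \<xi> * cis (\<xi> \<bullet> x))"
    using assms(2) unfolding trig_polynomial_def by blast
  define c' where "c' = (\<lambda>\<xi>. if \<xi> \<in> S then c \<xi> else 0)"
  define d' where "d' = (\<lambda>\<xi>. if \<xi> \<in> T then d \<xi> else 0)"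
  have "g x = (\<Sum>\<xi>\<in>S \<union> T. c' \<xi> * cis (\<xi> \<bullet> x))" for x
    unfolding S(2) using S(1) T(1) by (intro sum.mono_neutral_cong_left) (auto simp: c'_def)
  moreover have "h x = (\<Sum>\<xi>\<in>S \<union> T. d' \<xi> * cis (\<xi> \<bullet> x))" for x
    unfolding T(2) using S(1) T(1) by (intro sum.mono_neutral_cong_left) (auto simp: d'_def)
  ultimately have "g x + h x = (\<Sum>\<xi>\<in>S \<union> T. (c' \<xi> + d' \<xi>) * cis (\<xi> \<bullet> x))" for x
    by (simp add: sum.distrib distrib_right)
  then show ?thesis
    unfolding trig_polynomial_def using S(1) T(1) by (intro exI[of _ "S \<union> T"]) auto
qed

lemma trig_polynomial_mult:
  assumes "trig_polynomial g" "trig_polynomial h"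
  shows "trig_polynomial (\<lambda>x. g x * h x)"
proof -
  obtain S c where S: "finite S" "\<And>x. g x = (\<Sum>\<xi>\<in>S. c \<xi> * cis (\<xi> \<bullet> x))"
    using assms(1) unfolding trig_polynomial_def by blast
  obtain T d where T: "finite T" "\<And>x. h x = (\<Sum>\<xi>\<in>T. d \<xi> * cis (\<xi> \<bullet> x))"
    using assms(2) unfolding trig_polynomial_def by blast
  define U where "U = (\<lambda>p. fst p + snd p) ` (S \<times> T)"
  define e where "e = (\<lambda>\<zeta>. \<Sum>p\<in>{p \<in> S \<times> T. fst p + snd p = \<zeta>}. c (fst p) * d (snd p))"
  have fin: "finite (S \<times> T)" "finite U" using S(1) T(1) by (auto simp: U_def)
  have "g x * h x = (\<Sum>\<zeta>\<in>U. e \<zeta> * cis (\<zeta> \<bullet> x))" for x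
  proof -
    have "g x * h x = (\<Sum>p\<in>S \<times> T. c (fst p) * d (snd p) * cis ((fst p + snd p) \<bullet> x))"
      unfolding S(2) T(2) sum_product sum.cartesian_product
      by (intro sum.cong) (auto simp: inner_add_left cis_mult[symmetric] algebra_simps)
    also have "\<dots> = (\<Sum>\<zeta>\<in>U. \<Sum>p\<in>{p \<in> S \<times> T. fst p + snd p = \<zeta>}.
                          c (fst p) * d (snd p) * cis ((fst p + snd p) \<bullet> x))"
      by (rule sum.group[symmetric]) (use fin in \<open>auto simp: U_def\<close>)
    also have "\<dots> = (\<Sum>\<zeta>\<in>U. e \<zeta> * cis (\<zeta> \<bullet> x))"
      unfolding e_def sum_distrib_right by (intro sum.cong refl) auto
    finally show ?thesis .
  qed
  then show ?thesis unfolding trig_polynomial_def using fin by blast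
qed

lemma trig_polynomial_sum:
  assumes "finite I" "\<And>i. i \<in> I \<Longrightarrow> trig_polynomial (g i)"
  shows "trig_polynomial (\<lambda>x. \<Sum>i\<in>I. g i x)"
  using assms by (induction I rule: finite_induct) (auto intro: trig_polynomial_add trig_polynomial_const)

lemma trig_polynomial_sin: "trig_polynomial (\<lambda>x. complex_of_real (sin (\<xi> \<bullet> x)))"
proof -
  have "complex_of_real (sin (\<xi> \<bullet> x)) = (-\<i>/2) * cis (\<xi> \<bullet> x) + (\<i>/2) * cis ((-\<xi>) \<bullet> x)" for x
    by (simp add: complex_eq_iff cis.code)
  then show ?thesis
    using trig_polynomial_add[OF trig_polynomial_mult[OF trig_polynomial_const trig_polynomial_cis]
        trig_polynomial_mult[OF trig_polynomial_const trig_polynomial_cis], of "-\<i>/2" \<xi> "\<i>/2" "-\<xi>"]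
    by simp
qed

definition sin_coords :: "real \<Rightarrow> 'a::euclidean_space \<Rightarrow> 'a" where
  "sin_coords a x = (\<Sum>i\<in>Basis. sin (a * (x \<bullet> i)) *\<^sub>R i)"

lemma sin_coords_inner: "i \<in> Basis \<Longrightarrow> sin_coords a x \<bullet> i = sin (a * (x \<bullet> i))"
  unfolding sin_coords_def by (simp add: inner_sum_left inner_Basis if_distrib cong: if_cong)

lemma sin_coords_in_cube: "sin_coords a x \<in> cbox (- One) One"
  by (auto simp: mem_box sin_coords_inner)

lemma trig_polynomial_polynomial_sin_coords:
  fixes Q :: "'a::euclidean_space \<Rightarrow> real"
  assumes "real_polynomial_function Q"
  shows "trig_polynomial (\<lambda>x. complex_of_real (Q (sin_coords a x)))"
  using assms
proof induction
  case (linear f)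
  then interpret bounded_linear f .
  have "complex_of_real (f (sin_coords a x))
      = (\<Sum>i\<in>Basis. complex_of_real (f i) * complex_of_real (sin ((a *\<^sub>R i) \<bullet> x)))" for x
    unfolding sin_coords_def by (simp add: sum scale inner_commute mult.commute)
  then show ?case
    by (simp only:) (intro trig_polynomial_sum trig_polynomial_mult trig_polynomial_const trig_polynomial_sin; simp)
qed (simp_all add: trig_polynomial_const trig_polynomial_add trig_polynomial_mult)

lemma integral_trig_polynomial_eq_0:
  fixes f :: "'a::euclidean_space \<Rightarrow> real"
  assumes f: "integrable lborel f" and F: "\<And>\<xi>. fourier f \<xi> = 0"
    and g: "trig_polynomial g"
  shows "(\<integral>x. f x *\<^sub>R g x \<partial>lborel) = 0"
proof -
  obtain S c where S: "finite S" "\<And>x. g x = (\<Sum>\<xi>\<in>S. c \<xi> * cis (\<xi> \<bullet> x))"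
    using g unfolding trig_polynomial_def by blast
  have "(\<integral>x. f x *\<^sub>R g x \<partial>lborel) = (\<integral>x. (\<Sum>\<xi>\<in>S. c \<xi> * (f x *\<^sub>R cis (\<xi> \<bullet> x))) \<partial>lborel)"
    unfolding S(2) by (simp add: scaleR_sum_right)
  also have "\<dots> = (\<Sum>\<xi>\<in>S. (\<integral>x. c \<xi> * (f x *\<^sub>R cis (\<xi> \<bullet> x)) \<partial>lborel))"
    by (rule Bochner_Integration.integral_sum)
      (use integrable_mult_right[OF integrable_fourier_integrand[OF f]] in simp)
  also have "\<dots> = (\<Sum>\<xi>\<in>S. c \<xi> * fourier f \<xi>)"
    unfolding fourier_def by (intro sum.cong refl integral_mult_right_zero)
  finally show ?thesis by (simp add: F)
qed

definition arcsin_coords :: "real \<Rightarrow> 'a::euclidean_space \<Rightarrow> 'a" where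
  "arcsin_coords a u = (\<Sum>i\<in>Basis. (arcsin (u \<bullet> i) / a) *\<^sub>R i)"

lemma continuous_on_arcsin_coords: "a \<noteq> 0 \<Longrightarrow> continuous_on (cbox (- One) One) (arcsin_coords a)"
  unfolding arcsin_coords_def by (intro continuous_intros) (auto simp: mem_box)

lemma arcsin_coords_sin_coords:
  fixes x :: "'a::euclidean_space"
  assumes a: "0 < a" and x: "a * norm x \<le> pi / 2"
  shows "arcsin_coords a (sin_coords a x) = x"
proof -
  have "arcsin (sin (a * (x \<bullet> i))) = a * (x \<bullet> i)" if "i \<in> Basis" for i
  proof (rule arcsin_sin)
    have "\<bar>a * (x \<bullet> i)\<bar> \<le> a * norm x"
      using Basis_le_norm[OF that, of x] a by (simp add: abs_mult)
    then show "- (pi / 2) \<le> a * (x \<bullet> i)" "a * (x \<bullet> i) \<le> pi / 2" using x by linarith+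
  qed
  then show ?thesis
    using a by (simp add: arcsin_coords_def sin_coords_inner euclidean_representation cong: sum.cong)
qed

lemma trig_polynomial_approx_sin_coords:
  fixes g :: "'a::euclidean_space \<Rightarrow> real"
  assumes g: "continuous_on (cbox (- One) One) g" and e: "0 < e"
  obtains P where "trig_polynomial (\<lambda>x. complex_of_real (P x))" "continuous_on UNIV P"
    "\<And>x. \<bar>g (sin_coords a x) - P x\<bar> < e"
proof -
  obtain Q where Q: "polynomial_function Q" "\<And>u. u \<in> cbox (- One) One \<Longrightarrow> \<bar>g u - Q u\<bar> < e"
    using Stone_Weierstrass_polynomial_function[OF compact_cbox g e] by (metis real_norm_def)
  show ?thesis
  proof
    show "trig_polynomial (\<lambda>x. complex_of_real (Q (sin_coords a x)))"
      by (rule trig_polynomial_polynomial_sin_coords) (simp add: real_polynomial_function_eq Q(1))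
    have "continuous_on UNIV (sin_coords a :: 'a \<Rightarrow> 'a)"
      unfolding sin_coords_def by (intro continuous_intros)
    then show "continuous_on UNIV (\<lambda>x. Q (sin_coords a x))"
      by (rule continuous_on_compose2[OF continuous_on_polymonial_function[OF Q(1)]]) auto
    show "\<bar>g (sin_coords a x) - Q (sin_coords a x)\<bar> < e" for x
      by (rule Q(2)[OF sin_coords_in_cube])
  qed
qed

lemma trig_polynomial_approx:
  fixes \<phi> :: "'a::euclidean_space \<Rightarrow> real"
  assumes \<phi>: "continuous_on UNIV \<phi>" and \<phi>_bound: "\<And>x. \<bar>\<phi> x\<bar> \<le> 1"
  obtains P :: "nat \<Rightarrow> 'a \<Rightarrow> real" where
    "\<And>n. trig_polynomial (\<lambda>x. complex_of_real (P n x))"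
    "\<And>n. continuous_on UNIV (P n)"
    "\<And>n x. \<bar>P n x\<bar> \<le> 2"
    "\<And>x. (\<lambda>n. P n x) \<longlonglongrightarrow> \<phi> x"
proof -
  \<comment> \<open>On the ball of radius n + 1, phi is a continuous function of sin_coords (a n).\<close>
  define a where "a = (\<lambda>n::nat. pi / (2 * real (Suc n)))"
  have a_pos: "a n > 0" for n by (simp add: a_def)
  have \<phi>_sin_coords: "\<phi> (arcsin_coords (a n) (sin_coords (a n) x)) = \<phi> x" if "norm x \<le> real (Suc n)" for n x
  proof -
    have "a n * norm x \<le> a n * real (Suc n)" using that a_pos[of n] by (intro mult_left_mono) auto
    also have "\<dots> = pi / 2" by (simp add: a_def field_simps)
    finally have "arcsin_coords (a n) (sin_coords (a n) x) = x" by (rule arcsin_coords_sin_coords[OF a_pos])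
    then show ?thesis by simp
  qed
  have "\<exists>P. trig_polynomial (\<lambda>x. complex_of_real (P x)) \<and> continuous_on UNIV P \<and>
          (\<forall>x. \<bar>\<phi> (arcsin_coords (a n) (sin_coords (a n) x)) - P x\<bar> < 1 / real (Suc n))" for n
  proof -
    have "continuous_on (cbox (- One) One) (\<lambda>u. \<phi> (arcsin_coords (a n) u))"
      using a_pos[of n] by (intro continuous_on_compose2[OF \<phi> continuous_on_arcsin_coords]) auto
    then show ?thesis
      by (rule trig_polynomial_approx_sin_coords[where a="a n" and e="1 / real (Suc n)"]) auto
  qed
  then obtain P where P_trig: "\<And>n. trig_polynomial (\<lambda>x. complex_of_real (P n x))"
    and P_cont: "\<And>n. continuous_on UNIV (P n)"
    and P_close: "\<And>n x. \<bar>\<phi> (arcsin_coords (a n) (sin_coords (a n) x)) - P n x\<bar> < 1 / real (Suc n)"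
    by metis
  show ?thesis
  proof (rule that[OF P_trig P_cont])
    show "\<bar>P n x\<bar> \<le> 2" for n x
      using P_close[of n x] \<phi>_bound[of "arcsin_coords (a n) (sin_coords (a n) x)"]
        divide_le_eq_1[of 1 "real (Suc n)"] by linarith
    show "(\<lambda>n. P n x) \<longlonglongrightarrow> \<phi> x" for x
    proof -
      obtain N :: nat where N: "norm x \<le> real N" using real_arch_simple by blast
      have "eventually (\<lambda>n. norm (P n x - \<phi> x) \<le> inverse (real (Suc n))) sequentially"
      proof (rule eventually_sequentiallyI[of N])
        fix n assume "N \<le> n"
        then show "norm (P n x - \<phi> x) \<le> inverse (real (Suc n))"
          using P_close[of n x] \<phi>_sin_coords[of x n] N by (simp add: divide_inverse)
      qed
      then have "(\<lambda>n. P n x - \<phi> x) \<longlonglongrightarrow> 0"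
        by (rule Lim_null_comparison) (rule LIMSEQ_inverse_real_of_nat)
      then show ?thesis by (rule LIM_zero_cancel)
    qed
  qed
qed

lemma integral_mult_continuous_eq_0:
  fixes f \<phi> :: "'a::euclidean_space \<Rightarrow> real"
  assumes f: "integrable lborel f" and F: "\<And>\<xi>. fourier f \<xi> = 0"
    and \<phi>: "continuous_on UNIV \<phi>" and \<phi>_bound: "\<And>x. \<bar>\<phi> x\<bar> \<le> 1"
  shows "(\<integral>x. f x * \<phi> x \<partial>lborel) = 0"
proof -
  obtain P where P_trig: "\<And>n. trig_polynomial (\<lambda>x. complex_of_real (P n x))"
    and P_cont: "\<And>n. continuous_on UNIV (P n)" and P_bound: "\<And>n x. \<bar>P n x\<bar> \<le> 2"
    and P_lim: "\<And>x. (\<lambda>n. P n x) \<longlonglongrightarrow> \<phi> x"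
    using trig_polynomial_approx[OF \<phi> \<phi>_bound] by blast
  have [measurable]: "f \<in> borel_measurable lborel" using f by auto
  have [measurable]: "P n \<in> borel_measurable lborel" for n
    using borel_measurable_continuous_onI[OF P_cont] by simp
  have "(\<lambda>n. \<integral>x. f x * P n x \<partial>lborel) \<longlonglongrightarrow> (\<integral>x. f x * \<phi> x \<partial>lborel)"
  proof (rule integral_dominated_convergence[where w="\<lambda>x. 2 * norm (f x)"])
    have "\<phi> \<in> borel_measurable lborel" using borel_measurable_continuous_onI[OF \<phi>] by simp
    then show "(\<lambda>x. f x * \<phi> x) \<in> borel_measurable lborel" by measurable
    show "AE x in lborel. norm (f x * P n x) \<le> 2 * norm (f x)" for n
      using P_bound by (intro AE_I2) (simp add: abs_mult mult.commute mult_left_mono)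
  qed (use f P_lim in \<open>auto intro!: AE_I2 tendsto_mult\<close>)
  moreover have "(\<integral>x. f x * P n x \<partial>lborel) = 0" for n
  proof -
    have "complex_of_real (\<integral>x. f x * P n x \<partial>lborel) = (\<integral>x. f x *\<^sub>R complex_of_real (P n x) \<partial>lborel)"
      by (simp add: scaleR_conv_of_real flip: of_real_mult)
    also have "\<dots> = 0" by (rule integral_trig_polynomial_eq_0[OF f F P_trig])
    finally show ?thesis by simp
  qed
  ultimately show ?thesis using LIMSEQ_unique[OF _ tendsto_const] by simp
qed

lemma integral_mult_indicator_closed_eq_0:
  fixes f :: "'a::euclidean_space \<Rightarrow> real"
  assumes f: "integrable lborel f"
    and continuous_eq_0: "\<And>\<phi>. continuous_on UNIV \<phi> \<Longrightarrow> (\<And>x. \<bar>\<phi> x\<bar> \<le> 1) \<Longrightarrow>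
                              (\<integral>x. f x * \<phi> x \<partial>lborel) = 0"
    and C: "closed C"
  shows "(\<integral>x. f x * indicator C x \<partial>lborel) = 0"
proof (cases "C = {}")
  case False
  define \<phi> where "\<phi> = (\<lambda>(k::nat) x. max 0 (1 - real k * infdist x C))"
  have \<phi>_cont: "continuous_on UNIV (\<phi> k)" for k
    unfolding \<phi>_def by (intro continuous_intros)
  have \<phi>_bound: "\<bar>\<phi> k x\<bar> \<le> 1" for k x
    using infdist_nonneg[of x C] unfolding \<phi>_def by (auto simp: zero_le_mult_iff)
  have [measurable]: "f \<in> borel_measurable lborel" using f by auto
  have [measurable]: "\<phi> k \<in> borel_measurable lborel" for k
    using borel_measurable_continuous_onI[OF \<phi>_cont] by simp
  have \<phi>_lim: "(\<lambda>k. \<phi> k x) \<longlonglongrightarrow> indicator C x" for x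
  proof (cases "x \<in> C")
    case False
    then have pos: "infdist x C > 0"
      using in_closed_iff_infdist_zero[OF C \<open>C \<noteq> {}\<close>] infdist_nonneg[of x C] by auto
    obtain N :: nat where N: "1 / infdist x C < N" using reals_Archimedean2 by blast
    have "eventually (\<lambda>k. \<phi> k x = 0) sequentially"
    proof (rule eventually_sequentiallyI[of N])
      fix k assume "N \<le> k"
      then have "1 / infdist x C < real k" using N by linarith
      then have "1 < real k * infdist x C" using pos by (simp add: field_simps)
      then show "\<phi> k x = 0" by (simp add: \<phi>_def)
    qed
    then show ?thesis using False tendsto_eventually by auto
  qed (simp add: \<phi>_def)
  have "(\<lambda>k. \<integral>x. f x * \<phi> k x \<partial>lborel) \<longlonglongrightarrow> (\<integral>x. f x * indicator C x \<partial>lborel)"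
  proof (rule integral_dominated_convergence[where w="\<lambda>x. norm (f x)"])
    have [measurable]: "C \<in> sets borel" using C by (rule borel_closed)
    show "(\<lambda>x. f x * indicator C x) \<in> borel_measurable lborel" by measurable
    show "AE x in lborel. norm (f x * \<phi> k x) \<le> norm (f x)" for k
      using \<phi>_bound by (intro AE_I2) (simp add: abs_mult mult_left_le)
  qed (use f \<phi>_lim in \<open>auto intro!: AE_I2 tendsto_mult\<close>)
  then show ?thesis using continuous_eq_0[OF \<phi>_cont \<phi>_bound] LIMSEQ_unique[OF _ tendsto_const] by simp
qed simp

lemma density_lborel_eq_if_closed_eq:
  fixes f g :: "'a::euclidean_space \<Rightarrow> real"
  assumes f: "integrable lborel f" and g: "integrable lborel g"
    and f_nonneg: "\<And>x. 0 \<le> f x" and g_nonneg: "\<And>x. 0 \<le> g x"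
    and closed_eq: "\<And>C. closed C \<Longrightarrow>
                      (\<integral>x. f x * indicator C x \<partial>lborel) = (\<integral>x. g x * indicator C x \<partial>lborel)"
  shows "density lborel f = density lborel g"
proof -
  have emeasure_closed: "emeasure (density lborel h) C = ennreal (\<integral>x. h x * indicator C x \<partial>lborel)"
    if h: "integrable lborel h" "\<And>x. 0 \<le> h x" and "closed C" for h :: "'a \<Rightarrow> real" and C
  proof -
    have C_borel[measurable]: "C \<in> sets borel" using \<open>closed C\<close> by (rule borel_closed)
    then have C: "C \<in> sets lborel" by simp
    have [measurable]: "h \<in> borel_measurable lborel" using h by auto
    have "emeasure (density lborel h) C = (\<integral>\<^sup>+x. ennreal (h x * indicator C x) \<partial>lborel)"
      by (subst emeasure_density) (auto intro!: nn_integral_cong simp: indicator_def)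
    also have "\<dots> = ennreal (\<integral>x. h x * indicator C x \<partial>lborel)"
      using integrable_mult_indicator[OF C h(1)] h(2)
      by (intro nn_integral_eq_integral) (auto simp: mult.commute)
    finally show ?thesis .
  qed
  show ?thesis
  proof (rule measure_eqI_generator_eq[where E="Collect closed" and \<Omega>=UNIV and A="\<lambda>_. UNIV"])
    show "Int_stable (Collect closed)" by (auto simp: Int_stable_def)
    show "sets (density lborel f) = sigma_sets UNIV (Collect closed)"
      "sets (density lborel g) = sigma_sets UNIV (Collect closed)"
      by (simp_all add: borel_eq_closed)
    show "emeasure (density lborel f) C = emeasure (density lborel g) C" if "C \<in> Collect closed" for C
      using that emeasure_closed[OF f f_nonneg] emeasure_closed[OF g g_nonneg] closed_eq by simp
    show "emeasure (density lborel f) UNIV \<noteq> \<infinity>"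
      using emeasure_closed[OF f f_nonneg closed_UNIV] by simp
  qed auto
qed

lemma AE_eq_0_if_integral_indicator_closed_eq_0:
  fixes f :: "'a::euclidean_space \<Rightarrow> real"
  assumes f: "integrable lborel f"
    and closed_eq_0: "\<And>C. closed C \<Longrightarrow> (\<integral>x. f x * indicator C x \<partial>lborel) = 0"
  shows "AE x in lborel. f x = 0"
proof -
  define f\<^sub>p f\<^sub>n where "f\<^sub>p = (\<lambda>x. max (f x) 0)" and "f\<^sub>n = (\<lambda>x. max (- f x) 0)"
  have fp: "integrable lborel f\<^sub>p" and fn: "integrable lborel f\<^sub>n"
    unfolding f\<^sub>p_def f\<^sub>n_def using f by (auto intro: integrable_max)
  have "density lborel f\<^sub>p = density lborel f\<^sub>n"
  proof (rule density_lborel_eq_if_closed_eq[OF fp fn])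
    fix C :: "'a set" assume "closed C"
    then have C: "C \<in> sets lborel" using borel_closed by simp
    have "(\<integral>x. f\<^sub>p x * indicator C x \<partial>lborel) - (\<integral>x. f\<^sub>n x * indicator C x \<partial>lborel)
        = (\<integral>x. f\<^sub>p x * indicator C x - f\<^sub>n x * indicator C x \<partial>lborel)"
      using integrable_mult_indicator[OF C fp] integrable_mult_indicator[OF C fn]
      by (intro Bochner_Integration.integral_diff[symmetric]) (auto simp: mult.commute)
    also have "\<dots> = (\<integral>x. f x * indicator C x \<partial>lborel)"
      by (intro Bochner_Integration.integral_cong) (auto simp: f\<^sub>p_def f\<^sub>n_def indicator_def)
    finally show "(\<integral>x. f\<^sub>p x * indicator C x \<partial>lborel) = (\<integral>x. f\<^sub>n x * indicator C x \<partial>lborel)"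
      using closed_eq_0[OF \<open>closed C\<close>] by simp
  qed (auto simp: f\<^sub>p_def f\<^sub>n_def)
  then have "AE x in lborel. ennreal (f\<^sub>p x) = ennreal (f\<^sub>n x)"
    using fp fn by (intro sigma_finite_measure.density_unique[OF sigma_finite_lborel]) auto
  then show ?thesis
    by eventually_elim (auto simp: f\<^sub>p_def f\<^sub>n_def max_def split: if_splits)
qed

theorem fourier_unique:
  fixes f g :: "'a::euclidean_space \<Rightarrow> real"
  assumes f: "integrable lborel f" and g: "integrable lborel g"
    and fourier_eq: "\<And>\<xi>. fourier f \<xi> = fourier g \<xi>"
  shows "AE x in lborel. f x = g x"
proof -
  have fg: "integrable lborel (\<lambda>x. f x - g x)" using f g by auto
  have "AE x in lborel. f x - g x = 0"
  proof (rule AE_eq_0_if_integral_indicator_closed_eq_0[OF fg])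
    show "(\<integral>x. (f x - g x) * indicator C x \<partial>lborel) = 0" if "closed C" for C
      using fg fourier_diff[OF f g] fourier_eq
      by (intro integral_mult_indicator_closed_eq_0 integral_mult_continuous_eq_0 that) auto
  qed
  then show ?thesis by eventually_elim simp
qed

section \<open>Convolution\<close>

lemma lborel_distr_minus: "distr lborel borel ((-) c) = (lborel :: 'a::euclidean_space measure)"
  using lborel_affine[of "-1" c] by (simp add: density_1)

lemma
  fixes h :: "'a::euclidean_space \<Rightarrow> 'b::{banach, second_countable_topology}"
  assumes h: "integrable lborel h"
  shows integrable_lborel_minus: "integrable lborel (\<lambda>y. h (c - y))"
    and integral_lborel_minus: "(\<integral>y. h (c - y) \<partial>lborel) = integral\<^sup>L lborel h"
    and integrable_lborel_translate: "integrable lborel (\<lambda>x. h (x - c))"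
    and integral_lborel_translate: "(\<integral>x. h (x - c) \<partial>lborel) = integral\<^sup>L lborel h"
proof -
  have [measurable]: "h \<in> borel_measurable borel" using h by auto
  have minus: "(-) c \<in> measurable lborel borel" and plus: "(+) (- c) \<in> measurable lborel borel"
    by simp_all
  show "integrable lborel (\<lambda>y. h (c - y))"
    using integrable_distr_eq[OF minus, of h] h by (simp add: lborel_distr_minus)
  show "(\<integral>y. h (c - y) \<partial>lborel) = integral\<^sup>L lborel h"
    using integral_distr[OF minus, of h] by (simp add: lborel_distr_minus)
  show "integrable lborel (\<lambda>x. h (x - c))"
    using integrable_distr_eq[OF plus, of h] h by (simp add: lborel_distr_plus)
  show "(\<integral>x. h (x - c) \<partial>lborel) = integral\<^sup>L lborel h"
    using integral_distr[OF plus, of h] by (simp add: lborel_distr_plus)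
qed

lemma integrable_conv_integrand:
  fixes f g :: "'a::euclidean_space \<Rightarrow> real"
  assumes f: "integrable lborel f" and g: "integrable lborel g"
  shows "integrable (lborel \<Otimes>\<^sub>M lborel) (\<lambda>(y, x). f (x - y) * g y)"
proof (rule lborel_pair.Fubini_integrable)
  have [measurable]: "f \<in> borel_measurable borel" "g \<in> borel_measurable borel" using f g by auto
  show "(\<lambda>(y, x). f (x - y) * g y) \<in> borel_measurable (lborel \<Otimes>\<^sub>M lborel)" by measurable
  have "(\<integral>x. norm (f (x - y) * g y) \<partial>lborel) = \<bar>g y\<bar> * (\<integral>x. \<bar>f x\<bar> \<partial>lborel)" for y
    using integral_lborel_translate[OF integrable_abs[OF f]] by (simp add: abs_mult)
  then show "integrable lborel (\<lambda>y. \<integral>x. norm (case (y, x) of (y, x) \<Rightarrow> f (x - y) * g y) \<partial>lborel)"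
    using g by simp
  show "AE y in lborel. integrable lborel (\<lambda>x. case (y, x) of (y, x) \<Rightarrow> f (x - y) * g y)"
    using integrable_lborel_translate[OF f] by simp
qed

lemma integrable_conv:
  fixes f g :: "'a::euclidean_space \<Rightarrow> real"
  assumes "integrable lborel f" "integrable lborel g"
  shows "integrable lborel (conv f g)"
  using lborel_pair.integrable_snd[OF integrable_conv_integrand[OF assms]] unfolding conv_def by simp

lemma fourier_translate:
  fixes f :: "'a::euclidean_space \<Rightarrow> real"
  assumes f: "integrable lborel f"
  shows "fourier (\<lambda>x. f (x - y)) \<xi> = cis (\<xi> \<bullet> y) * fourier f \<xi>"
proof -
  have "integrable lborel (\<lambda>x. f x *\<^sub>R cis (\<xi> \<bullet> (x + y)))"
    by (rule Bochner_Integration.integrable_bound[OF f]) (use f in auto)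
  then have "fourier (\<lambda>x. f (x - y)) \<xi> = (\<integral>x. f x *\<^sub>R cis (\<xi> \<bullet> (x + y)) \<partial>lborel)"
    unfolding fourier_def by (subst integral_lborel_translate[where c=y, symmetric]) simp_all
  also have "\<dots> = (\<integral>x. cis (\<xi> \<bullet> y) * (f x *\<^sub>R cis (\<xi> \<bullet> x)) \<partial>lborel)"
    by (intro Bochner_Integration.integral_cong) (auto simp: inner_add_right cis_mult[symmetric] algebra_simps)
  also have "\<dots> = cis (\<xi> \<bullet> y) * fourier f \<xi>"
    unfolding fourier_def by (rule integral_mult_right_zero)
  finally show ?thesis .
qed

lemma fourier_conv:
  fixes f g :: "'a::euclidean_space \<Rightarrow> real"
  assumes f: "integrable lborel f" and g: "integrable lborel g"
  shows "fourier (conv f g) \<xi> = fourier f \<xi> * fourier g \<xi>"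
proof -
  have P: "integrable (lborel \<Otimes>\<^sub>M lborel) (\<lambda>(y, x). (f (x - y) * g y) *\<^sub>R cis (\<xi> \<bullet> x))"
    by (rule Bochner_Integration.integrable_bound[OF integrable_conv_integrand[OF f g]])
      (use f g in \<open>auto simp: split_beta'\<close>)
  have "fourier (conv f g) \<xi> = (\<integral>x. \<integral>y. (f (x - y) * g y) *\<^sub>R cis (\<xi> \<bullet> x) \<partial>lborel \<partial>lborel)"
    unfolding fourier_def
  proof (rule integral_cong_AE)
    show "AE x in lborel. conv f g x *\<^sub>R cis (\<xi> \<bullet> x) = (\<integral>y. (f (x - y) * g y) *\<^sub>R cis (\<xi> \<bullet> x) \<partial>lborel)"
      using lborel_pair.AE_integrable_snd[OF integrable_conv_integrand[OF f g]]
      by eventually_elim (simp add: conv_def)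
    show "(\<lambda>x. conv f g x *\<^sub>R cis (\<xi> \<bullet> x)) \<in> borel_measurable lborel"
      using integrable_conv[OF f g] by measurable
    show "(\<lambda>x. \<integral>y. (f (x - y) * g y) *\<^sub>R cis (\<xi> \<bullet> x) \<partial>lborel) \<in> borel_measurable lborel"
      using lborel_pair.integrable_snd[OF P] by auto
  qed
  also have "\<dots> = (\<integral>y. \<integral>x. (f (x - y) * g y) *\<^sub>R cis (\<xi> \<bullet> x) \<partial>lborel \<partial>lborel)"
    by (rule lborel_pair.Fubini_integral[OF P])
  also have "\<dots> = (\<integral>y. (g y *\<^sub>R cis (\<xi> \<bullet> y)) * fourier f \<xi> \<partial>lborel)"
  proof (rule Bochner_Integration.integral_cong[OF refl])
    fix y
    have "(\<integral>x. (f (x - y) * g y) *\<^sub>R cis (\<xi> \<bullet> x) \<partial>lborel) = g y *\<^sub>R fourier (\<lambda>x. f (x - y)) \<xi>"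
      unfolding fourier_def by (simp add: mult.commute flip: integral_scaleR_right)
    then show "(\<integral>x. (f (x - y) * g y) *\<^sub>R cis (\<xi> \<bullet> x) \<partial>lborel) = (g y *\<^sub>R cis (\<xi> \<bullet> y)) * fourier f \<xi>"
      by (simp add: fourier_translate[OF f])
  qed
  also have "\<dots> = fourier g \<xi> * fourier f \<xi>"
    unfolding fourier_def by (rule integral_mult_left_zero)
  finally show ?thesis by (simp only: mult.commute)
qed

lemma integral_abs_conv_le:
  fixes f g :: "'a::euclidean_space \<Rightarrow> real"
  assumes f: "integrable lborel f" and g: "integrable lborel g"
  shows "(\<integral>x. \<bar>conv f g x\<bar> \<partial>lborel) \<le> (\<integral>x. \<bar>f x\<bar> \<partial>lborel) * (\<integral>x. \<bar>g x\<bar> \<partial>lborel)"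
proof -
  have P: "integrable (lborel \<Otimes>\<^sub>M lborel) (\<lambda>(y, x). \<bar>f (x - y) * g y\<bar>)"
    using integrable_abs[OF integrable_conv_integrand[OF f g]] by (simp add: split_beta')
  have "(\<integral>x. \<bar>conv f g x\<bar> \<partial>lborel) \<le> (\<integral>x. \<integral>y. \<bar>f (x - y) * g y\<bar> \<partial>lborel \<partial>lborel)"
  proof (rule integral_mono)
    show "integrable lborel (\<lambda>x. \<bar>conv f g x\<bar>)" using integrable_conv[OF f g] by auto
    show "integrable lborel (\<lambda>x. \<integral>y. \<bar>f (x - y) * g y\<bar> \<partial>lborel)"
      using lborel_pair.integrable_snd[OF P] by simp
    show "\<bar>conv f g x\<bar> \<le> (\<integral>y. \<bar>f (x - y) * g y\<bar> \<partial>lborel)" for x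
      unfolding conv_def by (rule integral_abs_bound)
  qed
  also have "\<dots> = (\<integral>y. \<integral>x. \<bar>f (x - y) * g y\<bar> \<partial>lborel \<partial>lborel)"
    by (rule lborel_pair.Fubini_integral[OF P])
  also have "\<dots> = (\<integral>y. \<bar>g y\<bar> * (\<integral>x. \<bar>f x\<bar> \<partial>lborel) \<partial>lborel)"
    using integral_lborel_translate[OF integrable_abs[OF f]] by (simp add: abs_mult)
  finally show ?thesis by (simp add: mult.commute)
qed

lemma integrable_conv_integrand_if_bounded:
  fixes f g :: "'a::euclidean_space \<Rightarrow> real"
  assumes [measurable]: "f \<in> borel_measurable borel"
    and f_bound: "\<And>x. \<bar>f x\<bar> \<le> B" and g: "integrable lborel g"
  shows "integrable lborel (\<lambda>y. f (x - y) * g y)"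
proof (rule Bochner_Integration.integrable_bound)
  show "integrable lborel (\<lambda>y. B * \<bar>g y\<bar>)" using g by auto
  show "(\<lambda>y. f (x - y) * g y) \<in> borel_measurable lborel" using g by measurable
  show "AE y in lborel. norm (f (x - y) * g y) \<le> norm (B * \<bar>g y\<bar>)"
    using f_bound[of 0] f_bound[of "x - _"] by (intro AE_I2) (simp add: abs_mult mult_right_mono)
qed

lemma conv_le_if_AE_le:
  fixes p q :: "'a::euclidean_space \<Rightarrow> real"
  assumes p: "integrable lborel p" and p_nonneg: "\<And>x. 0 \<le> p x"
    and p_total: "(\<integral>x. p x \<partial>lborel) = 1"
    and q_le: "AE y in lborel. q y \<le> G" and G: "0 \<le> G"
  shows "conv p q x \<le> G"
proof (cases "integrable lborel (\<lambda>y. p (x - y) * q y)")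
  \<comment> \<open>Otherwise conv p q x = 0, the Bochner integral of a non-integrable function.\<close>
  case True
  have "conv p q x \<le> (\<integral>y. p (x - y) * G \<partial>lborel)"
    unfolding conv_def
  proof (rule integral_mono_AE[OF True])
    show "integrable lborel (\<lambda>y. p (x - y) * G)" using integrable_lborel_minus[OF p] by auto
    show "AE y in lborel. p (x - y) * q y \<le> p (x - y) * G"
      using q_le by eventually_elim (simp add: p_nonneg mult_left_mono)
  qed
  also have "\<dots> = G" using integral_lborel_minus[OF p] p_total by simp
  finally show ?thesis .
qed (simp add: conv_def not_integrable_integral_eq G)

primrec iterated_conv :: "('a::euclidean_space \<Rightarrow> real) \<Rightarrow> ('a \<Rightarrow> real) \<Rightarrow> nat \<Rightarrow> 'a \<Rightarrow> real" where
  "iterated_conv p q 0 = p"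
| "iterated_conv p q (Suc n) = conv (iterated_conv p q n) q"

context
  fixes p q :: "'a::euclidean_space \<Rightarrow> real"
  assumes p: "integrable lborel p" and q: "integrable lborel q"
begin

lemma integrable_iterated_conv: "integrable lborel (iterated_conv p q n)"
  by (induction n) (simp_all add: p q integrable_conv)

lemma borel_measurable_iterated_conv [measurable]: "iterated_conv p q n \<in> borel_measurable borel"
  using integrable_iterated_conv by auto

lemma integral_abs_iterated_conv_le:
  "(\<integral>x. \<bar>iterated_conv p q n x\<bar> \<partial>lborel) \<le> (\<integral>x. \<bar>p x\<bar> \<partial>lborel) * (\<integral>x. \<bar>q x\<bar> \<partial>lborel) ^ n"
proof (induction n)
  case (Suc n)
  have "(\<integral>x. \<bar>iterated_conv p q (Suc n) x\<bar> \<partial>lborel)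
      \<le> (\<integral>x. \<bar>iterated_conv p q n x\<bar> \<partial>lborel) * (\<integral>x. \<bar>q x\<bar> \<partial>lborel)"
    using integral_abs_conv_le[OF integrable_iterated_conv q] by simp
  also have "\<dots> \<le> (\<integral>x. \<bar>p x\<bar> \<partial>lborel) * (\<integral>x. \<bar>q x\<bar> \<partial>lborel) ^ n * (\<integral>x. \<bar>q x\<bar> \<partial>lborel)"
    using Suc by (intro mult_right_mono) auto
  finally show ?case by (simp add: mult_ac)
qed simp

lemma abs_iterated_conv_le:
  assumes p_bound: "\<And>x. \<bar>p x\<bar> \<le> B"
  shows "\<bar>iterated_conv p q n x\<bar> \<le> B * (\<integral>x. \<bar>q x\<bar> \<partial>lborel) ^ n"
proof (induction n arbitrary: x)
  case (Suc n)
  let ?s = "\<integral>x. \<bar>q x\<bar> \<partial>lborel"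
  have "\<bar>iterated_conv p q (Suc n) x\<bar> \<le> (\<integral>y. \<bar>iterated_conv p q n (x - y) * q y\<bar> \<partial>lborel)"
    by (simp add: conv_def integral_abs_bound)
  also have "\<dots> \<le> (\<integral>y. B * ?s ^ n * \<bar>q y\<bar> \<partial>lborel)"
  proof (rule integral_mono)
    show "integrable lborel (\<lambda>y. \<bar>iterated_conv p q n (x - y) * q y\<bar>)"
      using integrable_conv_integrand_if_bounded[OF borel_measurable_iterated_conv Suc.IH q] by auto
    show "\<bar>iterated_conv p q n (x - y) * q y\<bar> \<le> B * ?s ^ n * \<bar>q y\<bar>" for y
      using Suc.IH[of "x - y"] by (simp add: abs_mult mult_right_mono)
  qed (use q in auto)
  finally show ?case by (simp add: mult_ac)
qed (simp add: p_bound)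

lemma fourier_iterated_conv: "fourier (iterated_conv p q n) \<xi> = fourier p \<xi> * fourier q \<xi> ^ n"
  by (induction n) (simp_all add: fourier_conv[OF integrable_iterated_conv q])

lemma abs_iterated_conv_le_far:
  assumes p_bound: "\<And>x. \<bar>p x\<bar> \<le> B" and p_L1: "(\<integral>x. \<bar>p x\<bar> \<partial>lborel) \<le> 1" and c: "0 \<le> c"
    and conv_far: "\<And>x. \<delta> \<le> norm x \<Longrightarrow> \<bar>conv p q x\<bar> \<le> c"
    and q_far: "\<And>y. \<delta> \<le> norm y \<Longrightarrow> \<bar>q y\<bar> \<le> c"
  shows "1 \<le> n \<Longrightarrow> real n * \<delta> \<le> norm x \<Longrightarrow>
         \<bar>iterated_conv p q n x\<bar> \<le> real n * c * (\<integral>x. \<bar>q x\<bar> \<partial>lborel) ^ (n - 1)"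
proof (induction n arbitrary: x rule: nat_induct_at_least)
  case base
  then show ?case using conv_far by simp
next
  case (Suc n)
  let ?s = "\<integral>x. \<bar>q x\<bar> \<partial>lborel"
  let ?h = "iterated_conv p q n"
  define b where "b = real n * c * ?s ^ (n - 1)"
  have b: "0 \<le> b" unfolding b_def using c by simp
  have h_L1: "(\<integral>x. \<bar>?h x\<bar> \<partial>lborel) \<le> ?s ^ n"
    using integral_abs_iterated_conv_le[of n] p_L1 mult_right_mono[OF p_L1, of "?s ^ n"]
    by simp
  have h_flip: "integrable lborel (\<lambda>y. \<bar>?h (x - y)\<bar>)"
    "(\<integral>y. \<bar>?h (x - y)\<bar> \<partial>lborel) = (\<integral>y. \<bar>?h y\<bar> \<partial>lborel)"
    using integrable_lborel_minus[OF integrable_abs[OF integrable_iterated_conv]]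
      integral_lborel_minus[OF integrable_abs[OF integrable_iterated_conv]] by auto
  \<comment> \<open>Split at norm y = delta: beyond it q is bounded, below it x - y is still far enough from
    the origin for the induction hypothesis.\<close>
  have split: "\<bar>?h (x - y) * q y\<bar> \<le> b * \<bar>q y\<bar> + c * \<bar>?h (x - y)\<bar>" for y
  proof (cases "\<delta> \<le> norm y")
    case True
    then have "\<bar>?h (x - y) * q y\<bar> \<le> c * \<bar>?h (x - y)\<bar>"
      unfolding abs_mult by (subst mult.commute) (intro mult_left_mono q_far, auto)
    then show ?thesis using b by (simp add: add_increasing)
  next
    case False
    have "norm x - norm y \<le> norm (x - y)" by (rule norm_triangle_ineq2)
    then have "real n * \<delta> \<le> norm (x - y)" using Suc.prems False by (simp add: algebra_simps)
    then have "\<bar>?h (x - y) * q y\<bar> \<le> b * \<bar>q y\<bar>"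
      unfolding abs_mult b_def by (intro mult_right_mono Suc.IH) auto
    then show ?thesis using c by (simp add: add_increasing2)
  qed
  have "\<bar>iterated_conv p q (Suc n) x\<bar> \<le> (\<integral>y. \<bar>?h (x - y) * q y\<bar> \<partial>lborel)"
    by (simp add: conv_def integral_abs_bound)
  also have "\<dots> \<le> (\<integral>y. b * \<bar>q y\<bar> + c * \<bar>?h (x - y)\<bar> \<partial>lborel)"
    using integrable_conv_integrand_if_bounded[OF borel_measurable_iterated_conv
        abs_iterated_conv_le[OF p_bound] q] q h_flip(1) split
    by (intro integral_mono) auto
  also have "\<dots> = b * ?s + c * (\<integral>y. \<bar>?h y\<bar> \<partial>lborel)"
    using q h_flip by (subst Bochner_Integration.integral_add) auto
  also have "\<dots> \<le> b * ?s + c * ?s ^ n"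
    using h_L1 c by (intro add_left_mono mult_left_mono) auto
  also have "\<dots> = real (Suc n) * c * ?s ^ (Suc n - 1)"
    using Suc.hyps unfolding b_def by (cases n) (auto simp: algebra_simps)
  finally show ?case .
qed

end

section \<open>The convolution exponential\<close>

lemma
  fixes a :: "nat \<Rightarrow> real"
  assumes a: "\<And>n. \<bar>a n\<bar> \<le> K * r ^ n / fact n"
  shows summable_abs_if_exp_bound: "summable (\<lambda>n. \<bar>a n\<bar>)"
    and abs_suminf_le_exp: "\<bar>suminf a\<bar> \<le> K * exp r"
proof -
  have exp: "(\<lambda>n. K * r ^ n / fact n) sums (K * exp r)"
    using sums_mult[OF exp_converges[of r], of K] by (simp add: divide_inverse mult_ac)
  show sa: "summable (\<lambda>n. \<bar>a n\<bar>)"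
    by (rule summable_comparison_test'[OF sums_summable[OF exp]]) (use a in auto)
  have "\<bar>suminf a\<bar> \<le> (\<Sum>n. \<bar>a n\<bar>)" by (rule summable_rabs[OF sa])
  also have "\<dots> \<le> K * exp r"
    using suminf_le[OF a sa sums_summable[OF exp]] sums_unique[OF exp] by simp
  finally show "\<bar>suminf a\<bar> \<le> K * exp r" .
qed

text \<open>conv_exp p q t is p * exp (- t q), the exponential being taken in the convolution algebra.\<close>

definition conv_exp :: "('a::euclidean_space \<Rightarrow> real) \<Rightarrow> ('a \<Rightarrow> real) \<Rightarrow> real \<Rightarrow> 'a \<Rightarrow> real" where
  "conv_exp p q t x = (\<Sum>n. (-t) ^ n / fact n * iterated_conv p q n x)"

context
  fixes p q :: "'a::euclidean_space \<Rightarrow> real" and B :: real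
  assumes p: "integrable lborel p" and q: "integrable lborel q"
    and p_bound: "\<And>x. \<bar>p x\<bar> \<le> B"
begin

lemma abs_conv_exp_term_le:
  "\<bar>(-t) ^ n / fact n * iterated_conv p q n x\<bar> \<le> B * (\<bar>t\<bar> * (\<integral>x. \<bar>q x\<bar> \<partial>lborel)) ^ n / fact n"
proof -
  have "\<bar>(-t) ^ n / fact n * iterated_conv p q n x\<bar> = \<bar>t\<bar> ^ n / fact n * \<bar>iterated_conv p q n x\<bar>"
    by (simp add: abs_mult power_abs)
  also have "\<dots> \<le> \<bar>t\<bar> ^ n / fact n * (B * (\<integral>x. \<bar>q x\<bar> \<partial>lborel) ^ n)"
    by (intro mult_left_mono abs_iterated_conv_le[OF p q p_bound]) auto
  finally show ?thesis by (simp add: power_mult_distrib field_simps)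
qed

lemma abs_conv_exp_le: "\<bar>conv_exp p q t x\<bar> \<le> B * exp (\<bar>t\<bar> * (\<integral>x. \<bar>q x\<bar> \<partial>lborel))"
  unfolding conv_exp_def by (rule abs_suminf_le_exp[OF abs_conv_exp_term_le])

lemma summable_abs_conv_exp_term: "summable (\<lambda>n. \<bar>(-t) ^ n / fact n * iterated_conv p q n x\<bar>)"
  by (rule summable_abs_if_exp_bound[OF abs_conv_exp_term_le])

lemma summable_integral_abs_conv_exp_term:
  "summable (\<lambda>n. \<integral>x. \<bar>(-t) ^ n / fact n * iterated_conv p q n x\<bar> \<partial>lborel)"
proof (rule summable_rabs_cancel, rule summable_abs_if_exp_bound)
  let ?s = "\<integral>x. \<bar>q x\<bar> \<partial>lborel"
  fix n
  have "(\<integral>x. \<bar>(-t) ^ n / fact n * iterated_conv p q n x\<bar> \<partial>lborel)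
      = \<bar>t\<bar> ^ n / fact n * (\<integral>x. \<bar>iterated_conv p q n x\<bar> \<partial>lborel)"
    by (simp add: abs_mult power_abs)
  also have "\<dots> \<le> \<bar>t\<bar> ^ n / fact n * ((\<integral>x. \<bar>p x\<bar> \<partial>lborel) * ?s ^ n)"
    by (intro mult_left_mono integral_abs_iterated_conv_le[OF p q]) auto
  finally show "\<bar>\<integral>x. \<bar>(-t) ^ n / fact n * iterated_conv p q n x\<bar> \<partial>lborel\<bar>
      \<le> (\<integral>x. \<bar>p x\<bar> \<partial>lborel) * (\<bar>t\<bar> * ?s) ^ n / fact n"
    by (simp add: power_mult_distrib field_simps)
qed

lemma integrable_conv_exp: "integrable lborel (conv_exp p q t)"
  unfolding conv_exp_def
  using integrable_iterated_conv[OF p q] summable_abs_conv_exp_term summable_integral_abs_conv_exp_term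
  by (intro integrable_suminf) auto

lemma fourier_conv_exp: "fourier (conv_exp p q t) \<xi> = fourier p \<xi> * exp (- of_real t * fourier q \<xi>)"
proof -
  define f where "f = (\<lambda>n x. (-t) ^ n / fact n * iterated_conv p q n x)"
  have f: "integrable lborel (f n)" for n
    unfolding f_def using integrable_iterated_conv[OF p q] by auto
  have "fourier (conv_exp p q t) \<xi> = (\<integral>x. (\<Sum>n. f n x *\<^sub>R cis (\<xi> \<bullet> x)) \<partial>lborel)"
    unfolding fourier_def conv_exp_def f_def
    by (intro Bochner_Integration.integral_cong refl suminf_scaleR_left
        summable_rabs_cancel[OF summable_abs_conv_exp_term])
  also have "\<dots> = (\<Sum>n. fourier (f n) \<xi>)"
    unfolding fourier_def
  proof (rule integral_suminf)
    show "integrable lborel (\<lambda>x. f n x *\<^sub>R cis (\<xi> \<bullet> x))" for n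
      by (rule integrable_fourier_integrand[OF f])
  qed (use summable_abs_conv_exp_term summable_integral_abs_conv_exp_term in \<open>simp_all add: f_def\<close>)
  also have "\<dots> = (\<Sum>n. fourier p \<xi> * ((- of_real t * fourier q \<xi>) ^ n /\<^sub>R fact n))"
  proof (intro suminf_cong)
    fix n
    have "fourier (f n) \<xi> = ((-t) ^ n / fact n) *\<^sub>R (fourier p \<xi> * fourier q \<xi> ^ n)"
      unfolding f_def fourier_def
      by (simp only: scaleR_scaleR[symmetric] integral_scaleR_right)
        (simp only: fourier_def[symmetric] fourier_iterated_conv[OF p q])
    moreover have "(- of_real t * fourier q \<xi>) ^ n = of_real ((-t) ^ n) * fourier q \<xi> ^ n"
      by (simp only: power_mult_distrib of_real_power of_real_minus)
    ultimately show "fourier (f n) \<xi> = fourier p \<xi> * ((- of_real t * fourier q \<xi>) ^ n /\<^sub>R fact n)"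
      by (simp only: scaleR_conv_of_real of_real_mult of_real_divide divide_inverse of_real_inverse mult_ac)
  qed
  also have "\<dots> = fourier p \<xi> * exp (- of_real t * fourier q \<xi>)"
    by (rule sums_unique[symmetric], rule sums_mult, rule exp_converges)
  finally show ?thesis .
qed

end

section \<open>Levy exponents and transition densities\<close>

lemma one_minus_cos_le_square: "1 - cos (u::real) \<le> u\<^sup>2 / 2"
proof -
  have "sin (u/2) ^ 2 \<le> (u/2) ^ 2"
    using abs_sin_x_le_abs_x[of "u/2"] by (metis abs_ge_zero power2_abs power_mono)
  then show ?thesis using cos_double_sin[of "u/2"] by (simp add: power_divide)
qed

lemma one_minus_cos_inner_le:
  fixes \<xi> x :: "'a::euclidean_space"
  shows "1 - cos (\<xi> \<bullet> x) \<le> (2 + (norm \<xi>)\<^sup>2) * min 1 ((norm x)\<^sup>2)"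
proof (cases "(norm x)\<^sup>2 \<le> 1")
  case True
  have "(\<xi> \<bullet> x)\<^sup>2 \<le> (norm \<xi> * norm x)\<^sup>2"
    using Cauchy_Schwarz_ineq2[of \<xi> x] by (metis abs_ge_zero power2_abs power_mono)
  then have "1 - cos (\<xi> \<bullet> x) \<le> (norm \<xi>)\<^sup>2 * (norm x)\<^sup>2 / 2"
    using one_minus_cos_le_square[of "\<xi> \<bullet> x"] by (simp add: power_mult_distrib)
  also have "\<dots> \<le> (2 + (norm \<xi>)\<^sup>2) * (norm x)\<^sup>2" by (simp add: field_simps)
  finally show ?thesis using True by simp
next
  case False
  have "- cos (\<xi> \<bullet> x) \<le> 1 + (norm \<xi>)\<^sup>2"
    using cos_ge_minus_one[of "\<xi> \<bullet> x"] zero_le_power2[of "norm \<xi>"] by linarith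
  then show ?thesis using False by (simp add: min_def)
qed

lemma integrable_levy_exponent_integrand:
  fixes \<nu> :: "'a::euclidean_space \<Rightarrow> real"
  assumes "symmetric_levy_density \<nu>"
  shows "integrable lborel (\<lambda>x. (1 - cos (\<xi> \<bullet> x)) * \<nu> x)"
proof (rule Bochner_Integration.integrable_bound)
  have [measurable]: "\<nu> \<in> borel_measurable borel" and \<nu>_nonneg: "\<And>x. 0 \<le> \<nu> x"
    and \<nu>_int: "integrable lborel (\<lambda>x. min 1 ((norm x)\<^sup>2) * \<nu> x)"
    using assms unfolding symmetric_levy_density_def by auto
  show "integrable lborel (\<lambda>x. (2 + (norm \<xi>)\<^sup>2) * (min 1 ((norm x)\<^sup>2) * \<nu> x))"
    using \<nu>_int by auto
  have [measurable]: "(\<lambda>x::'a. cos (\<xi> \<bullet> x)) \<in> borel_measurable borel"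
    by (intro borel_measurable_continuous_onI continuous_intros)
  show "(\<lambda>x. (1 - cos (\<xi> \<bullet> x)) * \<nu> x) \<in> borel_measurable lborel" by measurable
  show "AE x in lborel. norm ((1 - cos (\<xi> \<bullet> x)) * \<nu> x)
                        \<le> norm ((2 + (norm \<xi>)\<^sup>2) * (min 1 ((norm x)\<^sup>2) * \<nu> x))"
    using one_minus_cos_inner_le[of \<xi>] \<nu>_nonneg
    by (intro AE_I2) (simp add: abs_mult mult.assoc[symmetric] mult_right_mono)
qed

lemma
  fixes \<sigma> :: "'a::euclidean_space \<Rightarrow> real"
  assumes \<sigma>: "integrable lborel \<sigma>"
  shows integrable_mult_cos_inner: "integrable lborel (\<lambda>x. \<sigma> x * cos (\<xi> \<bullet> x))"
    and integrable_mult_sin_inner: "integrable lborel (\<lambda>x. \<sigma> x * sin (\<xi> \<bullet> x))"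
proof -
  have [measurable]: "\<sigma> \<in> borel_measurable borel" using \<sigma> by auto
  have [measurable]: "(\<lambda>x::'a. cos (\<xi> \<bullet> x)) \<in> borel_measurable borel"
    "(\<lambda>x::'a. sin (\<xi> \<bullet> x)) \<in> borel_measurable borel"
    by (intro borel_measurable_continuous_onI continuous_intros)+
  show "integrable lborel (\<lambda>x. \<sigma> x * cos (\<xi> \<bullet> x))" "integrable lborel (\<lambda>x. \<sigma> x * sin (\<xi> \<bullet> x))"
    by (rule Bochner_Integration.integrable_bound[OF \<sigma>]; auto simp: abs_mult intro!: mult_left_le)+
qed

lemma levy_exponent_diff:
  fixes \<nu>X \<nu>Y :: "'a::euclidean_space \<Rightarrow> real"
  assumes X: "symmetric_levy_density \<nu>X" and Y: "symmetric_levy_density \<nu>Y"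
    and \<sigma>: "integrable lborel (\<lambda>x. \<nu>X x - \<nu>Y x)"
  shows "levy_exponent \<nu>Y \<xi> = levy_exponent \<nu>X \<xi> - (\<integral>x. \<nu>X x - \<nu>Y x \<partial>lborel)
           + (\<integral>x. (\<nu>X x - \<nu>Y x) * cos (\<xi> \<bullet> x) \<partial>lborel)"
proof -
  let ?\<sigma> = "\<lambda>x. \<nu>X x - \<nu>Y x"
  have "levy_exponent \<nu>Y \<xi> = (\<integral>x. (1 - cos (\<xi> \<bullet> x)) * \<nu>X x - (?\<sigma> x - ?\<sigma> x * cos (\<xi> \<bullet> x)) \<partial>lborel)"
    unfolding levy_exponent_def by (intro Bochner_Integration.integral_cong) (auto simp: algebra_simps)
  also have "\<dots> = levy_exponent \<nu>X \<xi> - ((\<integral>x. ?\<sigma> x \<partial>lborel) - (\<integral>x. ?\<sigma> x * cos (\<xi> \<bullet> x) \<partial>lborel))"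
    unfolding levy_exponent_def
    using integrable_levy_exponent_integrand[OF X] \<sigma> integrable_mult_cos_inner[OF \<sigma>]
    by (simp add: Bochner_Integration.integral_diff)
  finally show ?thesis by simp
qed

lemma fourier_even:
  fixes \<sigma> :: "'a::euclidean_space \<Rightarrow> real"
  assumes \<sigma>: "integrable lborel \<sigma>" and even: "\<And>x. \<sigma> (- x) = \<sigma> x"
  shows "fourier \<sigma> \<xi> = complex_of_real (\<integral>x. \<sigma> x * cos (\<xi> \<bullet> x) \<partial>lborel)"
proof -
  note cos = integrable_mult_cos_inner[OF \<sigma>] and sin = integrable_mult_sin_inner[OF \<sigma>]
  have "(\<integral>x. \<sigma> x * sin (\<xi> \<bullet> x) \<partial>lborel) = (\<integral>x. \<sigma> (0 - x) * sin (\<xi> \<bullet> (0 - x)) \<partial>lborel)"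
    using integral_lborel_minus[OF sin, of 0] by simp
  also have "\<dots> = - (\<integral>x. \<sigma> x * sin (\<xi> \<bullet> x) \<partial>lborel)" by (simp add: even)
  finally have sin_eq_0: "(\<integral>x. \<sigma> x * sin (\<xi> \<bullet> x) \<partial>lborel) = 0" by simp
  have "fourier \<sigma> \<xi> = (\<integral>x. of_real (\<sigma> x * cos (\<xi> \<bullet> x)) + \<i> * of_real (\<sigma> x * sin (\<xi> \<bullet> x)) \<partial>lborel)"
    unfolding fourier_def
    by (intro Bochner_Integration.integral_cong) (auto simp: complex_eq_iff cis.code)
  also have "\<dots> = of_real (\<integral>x. \<sigma> x * cos (\<xi> \<bullet> x) \<partial>lborel) + \<i> * of_real (\<integral>x. \<sigma> x * sin (\<xi> \<bullet> x) \<partial>lborel)"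
    by (simp only: Bochner_Integration.integral_add[OF integrable_of_real[OF cos]
          integrable_mult_right[OF integrable_of_real[OF sin]]] integral_mult_right_zero integral_complex_of_real)
  finally show ?thesis using sin_eq_0 by simp
qed

lemma
  fixes \<nu> :: "'a::euclidean_space \<Rightarrow> real"
  assumes "transition_density \<nu> p" "0 < t"
  shows transition_density_nonneg: "0 \<le> p t x"
    and transition_density_integrable: "integrable lborel (p t)"
    and fourier_transition_density: "fourier (p t) \<xi> = of_real (exp (- t * levy_exponent \<nu> \<xi>))"
    and integral_transition_density: "(\<integral>x. p t x \<partial>lborel) = 1"
proof -
  show "0 \<le> p t x" "integrable lborel (p t)"
    and F: "fourier (p t) \<xi> = of_real (exp (- t * levy_exponent \<nu> \<xi>))" for \<xi>
    using assms unfolding transition_density_def fourier_def by auto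
  have "complex_of_real (\<integral>x. p t x \<partial>lborel) = fourier (p t) 0"
    by (simp add: fourier_def scaleR_conv_of_real)
  then show "(\<integral>x. p t x \<partial>lborel) = 1" by (simp add: F levy_exponent_def)
qed

lemma transition_density_semigroup:
  fixes \<nu> :: "'a::euclidean_space \<Rightarrow> real"
  assumes p: "transition_density \<nu> p" and "0 < s" "0 < t"
  shows "AE x in lborel. p (s + t) x = conv (p s) (p t) x"
proof (rule fourier_unique)
  note integrable = transition_density_integrable[OF p]
  show "integrable lborel (p (s + t))" "integrable lborel (conv (p s) (p t))"
    using assms by (auto intro: integrable integrable_conv)
  show "fourier (p (s + t)) \<xi> = fourier (conv (p s) (p t)) \<xi>" for \<xi>
    using assms
    by (simp add: fourier_conv integrable fourier_transition_density[OF p] algebra_simps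
             flip: of_real_mult exp_add)
qed

lemma transition_density_AE_le_mono:
  fixes \<nu> :: "'a::euclidean_space \<Rightarrow> real"
  assumes p: "transition_density \<nu> p" and "0 < s" "s < t"
    and p_le: "AE x in lborel. p s x \<le> G" and G: "0 \<le> G"
  shows "AE x in lborel. p t x \<le> G"
proof -
  have conv_le: "conv (p (t - s)) (p s) x \<le> G" for x
    using \<open>s < t\<close>
    by (intro conv_le_if_AE_le[OF _ _ _ p_le G] transition_density_integrable[OF p]
          transition_density_nonneg[OF p] integral_transition_density[OF p]) auto
  have "AE x in lborel. p t x = conv (p (t - s)) (p s) x"
    using transition_density_semigroup[OF p, of "t - s" s] assms by simp
  then show ?thesis by eventually_elim (simp add: conv_le)
qed

section \<open>Bounds away from the origin\<close>

lemma of_nat_mult_power_le: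
  fixes s :: real
  assumes s: "0 \<le> s"
  shows "real n * s ^ (n - 1) \<le> (2 * (s + 1)) ^ n"
proof -
  have "real n \<le> 2 ^ n" using less_exp[of n] by (metis less_imp_le of_nat_le_iff of_nat_numeral of_nat_power)
  moreover have "s ^ (n - 1) \<le> (s + 1) ^ n"
  proof -
    have "s ^ (n - 1) \<le> (s + 1) ^ (n - 1)" using s by (intro power_mono) auto
    also have "\<dots> \<le> (s + 1) ^ n" using s by (intro power_increasing) auto
    finally show ?thesis .
  qed
  ultimately have "real n * s ^ (n - 1) \<le> 2 ^ n * (s + 1) ^ n" using s by (intro mult_mono) auto
  then show ?thesis by (simp only: power_mult_distrib)
qed

context
  fixes p q :: "'a::euclidean_space \<Rightarrow> real" and t \<zeta> \<delta> c1 c2 c3 :: real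
  assumes p: "integrable lborel p" and q: "integrable lborel q"
    and p_L1: "(\<integral>x. \<bar>p x\<bar> \<partial>lborel) \<le> 1"
    and t: "0 < t" "t \<le> 1"
    and p_bound: "\<And>x. \<bar>p x\<bar> \<le> c2 * t powr (- \<zeta>)"
    and p_far: "\<And>x. \<delta> \<le> norm x \<Longrightarrow> \<bar>p x\<bar> \<le> c3"
    and conv_far: "\<And>x. \<delta> \<le> norm x \<Longrightarrow> \<bar>conv p q x\<bar> \<le> c1"
    and q_far: "\<And>x. \<delta> \<le> norm x \<Longrightarrow> \<bar>q x\<bar> \<le> c1"
    and \<delta>: "0 < \<delta>" and c1: "0 \<le> c1"
begin

lemma power_mult_abs_iterated_conv_le_far:
  assumes x: "max (real_of_int \<lfloor>\<zeta>\<rfloor>) 1 * \<delta> \<le> norm x"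
  shows "t ^ n * \<bar>iterated_conv p q n x\<bar>
           \<le> (c1 + \<bar>c2\<bar> + \<bar>c3\<bar>) * (2 * ((\<integral>x. \<bar>q x\<bar> \<partial>lborel) + 1)) ^ n"
proof -
  let ?s = "\<integral>x. \<bar>q x\<bar> \<partial>lborel"
  let ?K = "c1 + \<bar>c2\<bar> + \<bar>c3\<bar>"
  have s: "0 \<le> ?s" by simp
  have K: "c1 \<le> ?K" "\<bar>c2\<bar> \<le> ?K" "\<bar>c3\<bar> \<le> ?K" "0 \<le> ?K" using c1 by auto
  have t_power: "t ^ n \<le> 1" using t by (simp add: power_le_one)
  \<comment> \<open>For n \<le> zeta the decay of p, q and conv p q away from the origin controls the n-th
    term; for larger n the factor t ^ n beats the blow-up t powr (- zeta) of p.\<close>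
  consider "n = 0" | "1 \<le> n" "real n \<le> \<zeta>" | "\<zeta> < real n" by linarith
  then show ?thesis
  proof cases
    case 1
    have "1 * \<delta> \<le> max (real_of_int \<lfloor>\<zeta>\<rfloor>) 1 * \<delta>" using \<delta> by (intro mult_right_mono) auto
    then have "\<delta> \<le> norm x" using x by linarith
    then show ?thesis using 1 p_far[of x] K by simp
  next
    case 2
    then have "int n \<le> \<lfloor>\<zeta>\<rfloor>" by (simp add: le_floor_iff)
    then have "real n \<le> max (real_of_int \<lfloor>\<zeta>\<rfloor>) 1" by linarith
    then have "real n * \<delta> \<le> max (real_of_int \<lfloor>\<zeta>\<rfloor>) 1 * \<delta>" using \<delta> by (intro mult_right_mono) auto
    then have "real n * \<delta> \<le> norm x" using x by linarith
    then have "\<bar>iterated_conv p q n x\<bar> \<le> real n * c1 * ?s ^ (n - 1)"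
      using abs_iterated_conv_le_far[OF p q p_bound p_L1 c1 conv_far q_far \<open>1 \<le> n\<close>] by simp
    also have "\<dots> = c1 * (real n * ?s ^ (n - 1))" by (simp only: mult_ac)
    also have "\<dots> \<le> ?K * (2 * (?s + 1)) ^ n"
      using of_nat_mult_power_le[OF s, of n] K by (intro mult_mono) auto
    finally have "\<bar>iterated_conv p q n x\<bar> \<le> ?K * (2 * (?s + 1)) ^ n" .
    moreover have "t ^ n * \<bar>iterated_conv p q n x\<bar> \<le> \<bar>iterated_conv p q n x\<bar>"
      using t t_power by (intro mult_left_le_one_le) auto
    ultimately show ?thesis by linarith
  next
    case 3
    have "t ^ n * \<bar>iterated_conv p q n x\<bar> \<le> t ^ n * (c2 * t powr (- \<zeta>) * ?s ^ n)"
      using t by (intro mult_left_mono abs_iterated_conv_le[OF p q p_bound]) auto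
    also have "\<dots> = c2 * t powr (real n - \<zeta>) * ?s ^ n"
      using t by (simp add: powr_diff powr_minus powr_realpow divide_inverse)
    also have "\<dots> \<le> \<bar>c2\<bar> * 1 * ?s ^ n"
      using t 3 s by (intro mult_right_mono mult_mono powr_le1) auto
    also have "\<dots> \<le> ?K * (2 * (?s + 1)) ^ n"
      using K s by (intro mult_mono power_mono) auto
    finally show ?thesis .
  qed
qed

lemma abs_conv_exp_le_far:
  assumes "max (real_of_int \<lfloor>\<zeta>\<rfloor>) 1 * \<delta> \<le> norm x"
  shows "\<bar>conv_exp p q t x\<bar> \<le> (c1 + \<bar>c2\<bar> + \<bar>c3\<bar>) * exp (2 * ((\<integral>x. \<bar>q x\<bar> \<partial>lborel) + 1))"
  unfolding conv_exp_def
proof (rule abs_suminf_le_exp)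
  fix n
  have "\<bar>(-t) ^ n / fact n * iterated_conv p q n x\<bar> = t ^ n * \<bar>iterated_conv p q n x\<bar> / fact n"
    using t by (simp add: abs_mult power_abs)
  also have "\<dots> \<le> (c1 + \<bar>c2\<bar> + \<bar>c3\<bar>) * (2 * ((\<integral>x. \<bar>q x\<bar> \<partial>lborel) + 1)) ^ n / fact n"
    by (intro divide_right_mono power_mult_abs_iterated_conv_le_far assms) auto
  finally show "\<bar>(-t) ^ n / fact n * iterated_conv p q n x\<bar>
      \<le> (c1 + \<bar>c2\<bar> + \<bar>c3\<bar>) * (2 * ((\<integral>x. \<bar>q x\<bar> \<partial>lborel) + 1)) ^ n / fact n" .
qed

end

lemma exp_mult_le_if_abs_le:
  fixes t m y Y :: real
  assumes "0 \<le> t" "t \<le> 1" "\<bar>y\<bar> \<le> Y"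
  shows "exp (t * m) * y \<le> exp \<bar>m\<bar> * Y"
proof -
  have "t * m \<le> \<bar>m\<bar>"
    using assms(1,2) mult_left_le_one_le[of "\<bar>m\<bar>" t] abs_mult[of t m] by auto
  then have "exp (t * m) * \<bar>y\<bar> \<le> exp \<bar>m\<bar> * Y" using assms(3) by (intro mult_mono) auto
  moreover have "exp (t * m) * y \<le> exp (t * m) * \<bar>y\<bar>" by (intro mult_left_mono) auto
  ultimately show ?thesis by linarith
qed

context
  fixes \<nu>X \<nu>Y :: "'a::euclidean_space \<Rightarrow> real" and pX pY :: "real \<Rightarrow> 'a \<Rightarrow> real"
  assumes levX: "symmetric_levy_density \<nu>X" and levY: "symmetric_levy_density \<nu>Y"
    and pX: "transition_density \<nu>X pX" and pY: "transition_density \<nu>Y pY"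
    and \<sigma>: "integrable lborel (\<lambda>x. \<nu>X x - \<nu>Y x)"
begin

lemma transition_density_eq_conv_exp:
  assumes t: "0 < t" and pX_bound: "\<And>x. \<bar>pX t x\<bar> \<le> B"
  shows "AE x in lborel. pY t x
           = exp (t * (\<integral>x. \<nu>X x - \<nu>Y x \<partial>lborel)) * conv_exp (pX t) (\<lambda>x. \<nu>X x - \<nu>Y x) t x"
proof (rule fourier_unique)
  let ?\<sigma> = "\<lambda>x. \<nu>X x - \<nu>Y x"
  let ?m = "\<integral>x. \<nu>X x - \<nu>Y x \<partial>lborel"
  note pX_int = transition_density_integrable[OF pX t]
  show "integrable lborel (pY t)" using transition_density_integrable[OF pY t] .
  show "integrable lborel (\<lambda>x. exp (t * ?m) * conv_exp (pX t) ?\<sigma> t x)"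
    using integrable_conv_exp[OF pX_int \<sigma> pX_bound] by simp
  fix \<xi> :: 'a
  have even: "?\<sigma> (- x) = ?\<sigma> x" for x
    using levX levY unfolding symmetric_levy_density_def by auto
  have "fourier (\<lambda>x. exp (t * ?m) * conv_exp (pX t) ?\<sigma> t x) \<xi>
      = of_real (exp (t * ?m)) * fourier (conv_exp (pX t) ?\<sigma> t) \<xi>"
    unfolding fourier_def by (simp add: scaleR_conv_of_real mult.assoc)
  also have "\<dots> = of_real (exp (t * ?m) * exp (- t * levy_exponent \<nu>X \<xi>)
                            * exp (- t * (\<integral>x. ?\<sigma> x * cos (\<xi> \<bullet> x) \<partial>lborel)))"
    by (simp add: fourier_conv_exp[OF pX_int \<sigma> pX_bound] fourier_even[OF \<sigma> even]
                  fourier_transition_density[OF pX t] flip: exp_of_real)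
  also have "\<dots> = fourier (pY t) \<xi>"
    by (simp add: fourier_transition_density[OF pY t] levy_exponent_diff[OF levX levY \<sigma>]
                  algebra_simps flip: exp_add)
  finally show "fourier (pY t) \<xi> = fourier (\<lambda>x. exp (t * ?m) * conv_exp (pX t) ?\<sigma> t x) \<xi>" ..
qed

lemma transition_density_AE_le_if_bounded:
  assumes t: "0 < t" "t \<le> 1" and pX_le: "\<And>x. pX t x \<le> B"
  shows "AE x in lborel. pY t x
           \<le> exp \<bar>\<integral>x. \<nu>X x - \<nu>Y x \<partial>lborel\<bar> * (B * exp (t * (\<integral>x. \<bar>\<nu>X x - \<nu>Y x\<bar> \<partial>lborel)))"
proof -
  have pX_bound: "\<bar>pX t x\<bar> \<le> B" for x
    using pX_le[of x] transition_density_nonneg[OF pX t(1), of x] by simp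
  show ?thesis
    using transition_density_eq_conv_exp[OF t(1) pX_bound]
  proof eventually_elim
    case (elim x)
    have "\<bar>conv_exp (pX t) (\<lambda>x. \<nu>X x - \<nu>Y x) t x\<bar> \<le> B * exp (t * (\<integral>x. \<bar>\<nu>X x - \<nu>Y x\<bar> \<partial>lborel))"
      using abs_conv_exp_le[OF transition_density_integrable[OF pX t(1)] \<sigma> pX_bound, of t] t by simp
    then show ?case using elim t by (simp add: exp_mult_le_if_abs_le)
  qed
qed

lemma transition_density_AE_le_far:
  assumes t: "0 < t" "t \<le> 1" and \<delta>: "0 < \<delta>"
    and sum_far: "\<And>x. \<delta> \<le> norm x \<Longrightarrow>
                    \<bar>conv (pX t) (\<lambda>y. \<nu>X y - \<nu>Y y) x\<bar> + \<bar>\<nu>X x - \<nu>Y x\<bar> \<le> c1"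
    and pX_le: "\<And>x. pX t x \<le> c2 * t powr (- \<zeta>)"
    and pX_far: "\<And>x. \<delta> \<le> norm x \<Longrightarrow> pX t x \<le> c3"
  shows "AE x in lborel. max (real_of_int \<lfloor>\<zeta>\<rfloor>) 1 * \<delta> \<le> norm x \<longrightarrow>
           pY t x \<le> exp \<bar>\<integral>x. \<nu>X x - \<nu>Y x \<partial>lborel\<bar>
                     * ((c1 + \<bar>c2\<bar> + \<bar>c3\<bar>) * exp (2 * ((\<integral>x. \<bar>\<nu>X x - \<nu>Y x\<bar> \<partial>lborel) + 1)))"
proof -
  note pX_nonneg = transition_density_nonneg[OF pX t(1)]
  have pX_bound: "\<bar>pX t x\<bar> \<le> c2 * t powr (- \<zeta>)" for x using pX_le[of x] pX_nonneg[of x] by simp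
  have conv_far: "\<bar>conv (pX t) (\<lambda>y. \<nu>X y - \<nu>Y y) x\<bar> \<le> c1"
    and \<sigma>_far: "\<bar>\<nu>X x - \<nu>Y x\<bar> \<le> c1" if "\<delta> \<le> norm x" for x
    using sum_far[OF that] abs_ge_zero[of "conv (pX t) (\<lambda>y. \<nu>X y - \<nu>Y y) x"]
      abs_ge_zero[of "\<nu>X x - \<nu>Y x"] by linarith+
  obtain b :: 'a where "b \<in> Basis" using nonempty_Basis by blast
  then have c1: "0 \<le> c1" using \<sigma>_far[of "\<delta> *\<^sub>R b"] \<delta> by force
  show ?thesis
    using transition_density_eq_conv_exp[OF t(1) pX_bound]
  proof eventually_elim
    case (elim x)
    have "\<bar>conv_exp (pX t) (\<lambda>x. \<nu>X x - \<nu>Y x) t x\<bar>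
            \<le> (c1 + \<bar>c2\<bar> + \<bar>c3\<bar>) * exp (2 * ((\<integral>x. \<bar>\<nu>X x - \<nu>Y x\<bar> \<partial>lborel) + 1))"
      if "max (real_of_int \<lfloor>\<zeta>\<rfloor>) 1 * \<delta> \<le> norm x"
      using transition_density_integrable[OF pX t(1)] pX_nonneg integral_transition_density[OF pX t(1)]
        pX_far
      by (intro abs_conv_exp_le_far[OF _ \<sigma> _ t pX_bound _ conv_far \<sigma>_far \<delta> c1 that]) auto
    then show ?case using elim t by (auto intro: exp_mult_le_if_abs_le)
  qed
qed

end

theorem mainTheorem7:
  fixes \<nu>X \<nu>Y :: "'a::euclidean_space \<Rightarrow> real"
    and pX pY :: "real \<Rightarrow> 'a \<Rightarrow> real"
    and \<delta> \<zeta> c1 c2 c3 :: real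
  assumes levX: "symmetric_levy_density \<nu>X"
    and levY: "symmetric_levy_density \<nu>Y"
    and pX: "transition_density \<nu>X pX"
    and pY: "transition_density \<nu>Y pY"
    and sigma_int: "integrable lborel (\<lambda>x. \<nu>X x - \<nu>Y x)"
    and delta: "\<delta> > 0" and zeta: "\<zeta> > 0"
    and i: "\<And>t x. 0 < t \<Longrightarrow> t \<le> 1 \<Longrightarrow> norm x \<ge> \<delta> \<Longrightarrow>
              \<bar>conv (pX t) (\<lambda>y. \<nu>X y - \<nu>Y y) x\<bar> + \<bar>\<nu>X x - \<nu>Y x\<bar> \<le> c1"
    and ii: "\<And>t x. 0 < t \<Longrightarrow> t \<le> 1 \<Longrightarrow> pX t x \<le> c2 * t powr (- \<zeta>)"
    and iii: "\<And>t x. 0 < t \<Longrightarrow> t \<le> 1 \<Longrightarrow> norm x \<ge> \<delta> \<Longrightarrow> pX t x \<le> c3"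
  shows "\<exists>C. \<forall>t>0. AE x in lborel.
           norm x \<ge> max (real_of_int \<lfloor>\<zeta>\<rfloor>) 1 * \<delta> \<longrightarrow> pY t x \<le> C"
proof -
  note levy_pair = levX levY pX pY sigma_int
  define C\<^sub>0 where "C\<^sub>0 = exp \<bar>\<integral>x. \<nu>X x - \<nu>Y x \<partial>lborel\<bar>
                       * ((c1 + \<bar>c2\<bar> + \<bar>c3\<bar>) * exp (2 * ((\<integral>x. \<bar>\<nu>X x - \<nu>Y x\<bar> \<partial>lborel) + 1)))"
  define C\<^sub>1 where "C\<^sub>1 = exp \<bar>\<integral>x. \<nu>X x - \<nu>Y x \<partial>lborel\<bar> * (c2 * exp (\<integral>x. \<bar>\<nu>X x - \<nu>Y x\<bar> \<partial>lborel))"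
  have small_times: "AE x in lborel. max (real_of_int \<lfloor>\<zeta>\<rfloor>) 1 * \<delta> \<le> norm x \<longrightarrow> pY t x \<le> C\<^sub>0"
    if t: "0 < t" "t \<le> 1" for t
    unfolding C\<^sub>0_def by (rule transition_density_AE_le_far[OF levy_pair t delta i[OF t] ii[OF t] iii[OF t]])
  have "AE x in lborel. pY 1 x \<le> C\<^sub>1"
    using transition_density_AE_le_if_bounded[OF levy_pair zero_less_one order_refl, of c2] ii[of 1]
    by (simp add: C\<^sub>1_def)
  moreover have "0 \<le> C\<^sub>1"
    using ii[of 1 0] transition_density_nonneg[OF pX zero_less_one, of 0] unfolding C\<^sub>1_def by simp
  ultimately have large_times: "AE x in lborel. pY t x \<le> C\<^sub>1" if "1 < t" for t
    by (rule transition_density_AE_le_mono[OF pY zero_less_one that])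
  show ?thesis
  proof (intro exI[of _ "max C\<^sub>0 C\<^sub>1"] allI impI)
    fix t :: real assume "0 < t"
    show "AE x in lborel. max (real_of_int \<lfloor>\<zeta>\<rfloor>) 1 * \<delta> \<le> norm x \<longrightarrow> pY t x \<le> max C\<^sub>0 C\<^sub>1"
    proof (cases "t \<le> 1")
      case True
      show ?thesis using small_times[OF \<open>0 < t\<close> True] by eventually_elim auto
    next
      case False
      then have "1 < t" by simp
      show ?thesis using large_times[OF \<open>1 < t\<close>] by eventually_elim auto
    qed
  qed
qed

end
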